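(* Let $P_{II*}=P_{II}$. For partitions $\xi,\upsilon\in P_I$, one has $\mathcal C_{\uparrow\{\downarrow\{\xi\}\}\text{-unc}}=\mathcal C_{\uparrow\{\downarrow\{\upsilon\}\}\text{-unc}}$ if and only if $\xi=\upsilon$.
   Context: Let $n\ge1$, $L=\{1,\dots,n\}$, and for $i\in L$ let $\mathcal H_i$ be a Hilbert space with $1<\dim\mathcal H_i<\infty$; $\mathcal H_X=\bigotimes_{i\in X}\mathcal H_i$ and $\mathcal D_X$ is the set of density operators on $\mathcal H_X$. $P_I$ is the set of partitions of $L$ ordered by refinement. For $\xi\in P_I$, $\mathcal D_{\xi\text{-unc}}=\{\varrho\in\mathcal D_L:\varrho=\bigotimes_{X\in\xi}\varrho_X,\ \varrho_X\in\mathcal D_X\}$, and for $S\subseteq P_I$, $\mathcal D_{S\text{-unc}}=\bigcup_{\xi\in S}\mathcal D_{\xi\text{-unc}}$. $P_{II}$ is the set of nonempty down-sets of $P_I$, ordered by inclusion; $P_{III*}$ is the set of nonempty up-sets of $P_{II*}$. $\downarrow\{\xi\}=\{\upsilon\in P_I:\upsilon\preceq\xi\}$ and $\uparrow\{\boldsymbol\zeta\}=\{\boldsymbol\upsilon\in P_{II}:\boldsymbol\zeta\subseteq\boldsymbol\upsilon\}$. For $\Xi\in P_{III*}$: $\overline\Xi=P_{II*}\setminus\Xi$ and $\mathcal C_{\Xi\text{-unc}}=\bigcap_{\boldsymbol\xi'\in\overline\Xi}(\mathcal D_L\setminus\mathcal D_{\boldsymbol\xi'\text{-unc}})\cap\bigcap_{\boldsymbol\xi\in\Xi}\mathcal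 D_{\boldsymbol\xi\text{-unc}}$. *)

theory Defs
  imports Complex_Main
begin

text \<open>Local dimensions are given by d :: nat \<Rightarrow> nat (d i = dim H_i).
  The standard product basis of H_X is indexed by multi-indices a :: nat \<Rightarrow> nat
  with a i < d i for i in X and a i = 0 outside X. Operators on H_X are
  represented by their matrices in this basis, as functions of two multi-indices,
  vanishing outside the index set.\<close>

type_synonym mop = "(nat \<Rightarrow> nat) \<Rightarrow> (nat \<Rightarrow> nat) \<Rightarrow> complex"

definition Lset :: "nat \<Rightarrow> nat set" where
  "Lset n = {1..n}"

definition idx :: "(nat \<Rightarrow> nat) \<Rightarrow> nat set \<Rightarrow> (nat \<Rightarrow> nat) set" where
  "idx d X = {a. (\<forall>i\<in>X. a i < d i) \<and> (\<forall>i. i \<notin> X \<longrightarrow> a i = 0)}"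

definition res :: "(nat \<Rightarrow> nat) \<Rightarrow> nat set \<Rightarrow> (nat \<Rightarrow> nat)" where
  "res a X = (\<lambda>i. if i \<in> X then a i else 0)"

definition density :: "(nat \<Rightarrow> nat) \<Rightarrow> nat set \<Rightarrow> mop \<Rightarrow> bool" where
  "density d X \<rho> \<longleftrightarrow>
     (\<forall>a b. (a \<notin> idx d X \<or> b \<notin> idx d X) \<longrightarrow> \<rho> a b = 0) \<and>
     (\<forall>v :: (nat \<Rightarrow> nat) \<Rightarrow> complex.
        (\<Sum>a\<in>idx d X. \<Sum>b\<in>idx d X. cnj (v a) * \<rho> a b * v b) \<in> \<real> \<and>
        0 \<le> Re (\<Sum>a\<in>idx d X. \<Sum>b\<in>idx d X. cnj (v a) * \<rho> a b * v b)) \<and>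
     (\<Sum>a\<in>idx d X. \<rho> a a) = 1"

definition DL :: "(nat \<Rightarrow> nat) \<Rightarrow> nat \<Rightarrow> mop set" where
  "DL d n = {\<rho>. density d (Lset n) \<rho>}"

definition tensor :: "(nat \<Rightarrow> nat) \<Rightarrow> nat \<Rightarrow> nat set set \<Rightarrow> (nat set \<Rightarrow> mop) \<Rightarrow> mop" where
  "tensor d n \<xi> \<rho>s = (\<lambda>a b. if a \<in> idx d (Lset n) \<and> b \<in> idx d (Lset n)
      then (\<Prod>X\<in>\<xi>. \<rho>s X (res a X) (res b X)) else 0)"

text \<open>Partitions of L, and refinement (\<upsilon> \<preceq> \<xi> iff \<upsilon> is finer than \<xi>).\<close>
definition partitions :: "nat \<Rightarrow> nat set set set" where
  "partitions n = {\<xi>. (\<forall>X\<in>\<xi>. X \<noteq> {}) \<and> \<Union>\<xi> = Lset n \<and>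
       (\<forall>X\<in>\<xi>. \<forall>Y\<in>\<xi>. X \<noteq> Y \<longrightarrow> X \<inter> Y = {})}"

definition refines :: "nat set set \<Rightarrow> nat set set \<Rightarrow> bool" where
  "refines \<upsilon> \<xi> \<longleftrightarrow> (\<forall>Y\<in>\<upsilon>. \<exists>X\<in>\<xi>. Y \<subseteq> X)"

definition Dunc :: "(nat \<Rightarrow> nat) \<Rightarrow> nat \<Rightarrow> nat set set \<Rightarrow> mop set" where
  "Dunc d n \<xi> = {\<rho>. density d (Lset n) \<rho> \<and>
      (\<exists>\<rho>s. (\<forall>X\<in>\<xi>. density d X (\<rho>s X)) \<and> \<rho> = tensor d n \<xi> \<rho>s)}"

definition DSunc :: "(nat \<Rightarrow> nat) \<Rightarrow> nat \<Rightarrow> nat set set set \<Rightarrow> mop set" where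
  "DSunc d n S = (\<Union>\<xi>\<in>S. Dunc d n \<xi>)"

text \<open>P_II: nonempty down-sets of P_I (here P_II* = P_II).\<close>
definition PII :: "nat \<Rightarrow> nat set set set set" where
  "PII n = {S. S \<noteq> {} \<and> S \<subseteq> partitions n \<and>
     (\<forall>\<xi>\<in>S. \<forall>\<upsilon>\<in>partitions n. refines \<upsilon> \<xi> \<longrightarrow> \<upsilon> \<in> S)}"

definition downset :: "nat \<Rightarrow> nat set set \<Rightarrow> nat set set set" where
  "downset n \<xi> = {\<upsilon>\<in>partitions n. refines \<upsilon> \<xi>}"

definition upset :: "nat \<Rightarrow> nat set set set \<Rightarrow> nat set set set set" where
  "upset n \<zeta> = {\<upsilon>\<in>PII n. \<zeta> \<subseteq> \<upsilon>}"

text \<open>C_{\<Xi>-unc}; intersected with D_L so that empty intersections are taken in D_L.\<close>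
definition Cunc :: "(nat \<Rightarrow> nat) \<Rightarrow> nat \<Rightarrow> nat set set set set \<Rightarrow> mop set" where
  "Cunc d n \<Xi> = DL d n \<inter>
     (\<Inter>\<xi>'\<in>PII n - \<Xi>. DL d n - DSunc d n \<xi>') \<inter>
     (\<Inter>\<xi>\<in>\<Xi>. DSunc d n \<xi>)"

end

theory Submission
  imports Defs "HOL-Library.FuncSet"
begin

text \<open>The witness for \<open>\<xi>\<close> is the product, over the blocks \<open>X\<close> of \<open>\<xi>\<close>, of the GHZ states
  \<open>(|0\<dots>0\<rangle> + |1\<dots>1\<rangle>)/\<surd>2\<close> on \<open>H_X\<close>. Its diagonal vanishes at every multi-index that is not
  constant (all 0 or all 1) on each block of \<open>\<xi>\<close>. The diagonal of any \<open>\<pi>\<close>-product state is a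
  product over the blocks of \<open>\<pi>\<close>, so its support is closed under replacing the entries of one
  index by those of another on a single block \<open>Y\<close> of \<open>\<pi>\<close>. If \<open>\<xi>\<close> does not refine \<open>\<pi>\<close>, some
  block \<open>X\<close> of \<open>\<xi>\<close> is cut by some \<open>Y \<in> \<pi>\<close>; mixing \<open>0\<close> and \<open>1_X\<close> on \<open>Y\<close> leaves the support,
  so the witness is \<open>\<xi>\<close>-uncorrelated but not \<open>\<pi>\<close>-uncorrelated. It therefore lies in
  \<open>C_{\<up>{\<down>{\<xi>}}}\<close>, and it lies in \<open>C_{\<up>{\<down>{\<upsilon>}}}\<close> only if \<open>\<xi>\<close> refines \<open>\<upsilon>\<close>; antisymmetry of
  refinement finishes the proof.\<close>

lemma finite_idx: "finite X \<Longrightarrow> finite (idx d X)"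
proof -
  assume "finite X"
  have "idx d X \<subseteq> (\<lambda>f i. if i \<in> X then f i else 0) ` PiE X (\<lambda>i. {..<d i})"
  proof
    fix a assume a: "a \<in> idx d X"
    then have "restrict a X \<in> PiE X (\<lambda>i. {..<d i})" by (auto simp: idx_def)
    moreover have "a = (\<lambda>i. if i \<in> X then restrict a X i else 0)" using a by (auto simp: idx_def)
    ultimately show "a \<in> (\<lambda>f i. if i \<in> X then f i else 0) ` PiE X (\<lambda>i. {..<d i})" by blast
  qed
  moreover have "finite (PiE X (\<lambda>i. {..<d i}))" using \<open>finite X\<close> by (intro finite_PiE) auto
  ultimately show ?thesis using finite_subset by blast
qed

lemma res_in_idx: "a \<in> idx d Y \<Longrightarrow> X \<subseteq> Y \<Longrightarrow> res a X \<in> idx d X"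
  by (auto simp: idx_def res_def)

lemma res_res: "Y \<subseteq> U \<Longrightarrow> res (res a U) Y = res a Y"
  by (auto simp: res_def fun_eq_iff)

lemma bij_betw_res_pair:
  assumes "X \<inter> U = {}"
  shows "bij_betw (\<lambda>a. (res a X, res a U)) (idx d (X \<union> U)) (idx d X \<times> idx d U)"
proof (rule bij_betwI')
  fix a a' assume "a \<in> idx d (X \<union> U)" "a' \<in> idx d (X \<union> U)"
  then show "((res a X, res a U) = (res a' X, res a' U)) = (a = a')"
    by (auto simp: idx_def res_def fun_eq_iff) metis
next
  fix a assume "a \<in> idx d (X \<union> U)"
  then show "(res a X, res a U) \<in> idx d X \<times> idx d U" by (auto intro: res_in_idx)
next
  fix p assume "p \<in> idx d X \<times> idx d U"
  then obtain b c where bc: "p = (b, c)" "b \<in> idx d X" "c \<in> idx d U" by auto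
  define a where "a = (\<lambda>i. if i \<in> X then b i else c i)"
  have "a \<in> idx d (X \<union> U)" "res a X = b" "res a U = c"
    using bc assms by (auto simp: a_def idx_def res_def fun_eq_iff)
  then show "\<exists>a\<in>idx d (X \<union> U). p = (res a X, res a U)" using bc by auto
qed

lemma sum_idx_Union_prod:
  fixes f :: "nat set \<Rightarrow> (nat \<Rightarrow> nat) \<Rightarrow> 'b::comm_semiring_1"
  assumes "finite F" "\<forall>X\<in>F. finite X" "\<forall>X\<in>F. \<forall>Y\<in>F. X \<noteq> Y \<longrightarrow> X \<inter> Y = {}"
  shows "(\<Sum>a\<in>idx d (\<Union>F). \<Prod>X\<in>F. f X (res a X)) = (\<Prod>X\<in>F. \<Sum>b\<in>idx d X. f X b)"
  using assms
proof (induction F rule: finite_induct)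
  case empty
  have "idx d {} = {\<lambda>_. 0}" by (auto simp: idx_def)
  then show ?case by simp
next
  case (insert X F)
  let ?U = "\<Union>F"
  let ?G = "\<lambda>c. \<Prod>Y\<in>F. f Y (res c Y)"
  have disj: "X \<inter> ?U = {}" using insert.prems(2) insert.hyps(2) by fastforce
  have "(\<Sum>a\<in>idx d (X \<union> ?U). \<Prod>Y\<in>insert X F. f Y (res a Y))
      = (\<Sum>a\<in>idx d (X \<union> ?U). (\<lambda>(b, c). f X b * ?G c) (res a X, res a ?U))"
    using insert.hyps by (intro sum.cong refl) (simp add: res_res Union_upper)
  also have "\<dots> = (\<Sum>p\<in>idx d X \<times> idx d ?U. (\<lambda>(b, c). f X b * ?G c) p)"
    by (rule sum.reindex_bij_betw[OF bij_betw_res_pair[OF disj]])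
  also have "\<dots> = (\<Sum>b\<in>idx d X. f X b) * (\<Sum>c\<in>idx d ?U. ?G c)"
    by (simp add: sum.cartesian_product[symmetric] sum_product)
  also have "(\<Sum>c\<in>idx d ?U. ?G c) = (\<Prod>Y\<in>F. \<Sum>b\<in>idx d Y. f Y b)"
    using insert by auto
  finally show ?case using insert.hyps by simp
qed

lemma density_rank_one:
  assumes rho: "\<And>a b. \<rho> a b = (if a \<in> idx d X \<and> b \<in> idx d X then of_real (v a * v b) else 0)"
    and norm: "(\<Sum>a\<in>idx d X. (v a)\<^sup>2) = 1"
  shows "density d X \<rho>"
proof -
  have quadratic_form: "(\<Sum>a\<in>idx d X. \<Sum>b\<in>idx d X. cnj (w a) * \<rho> a b * w b)
      = of_real ((cmod (\<Sum>b\<in>idx d X. of_real (v b) * w b))\<^sup>2)" for w :: "(nat \<Rightarrow> nat) \<Rightarrow> complex"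
  proof -
    let ?S = "\<Sum>b\<in>idx d X. of_real (v b) * w b"
    have "(\<Sum>a\<in>idx d X. \<Sum>b\<in>idx d X. cnj (w a) * \<rho> a b * w b)
        = (\<Sum>a\<in>idx d X. \<Sum>b\<in>idx d X. (cnj (w a) * of_real (v a)) * (of_real (v b) * w b))"
      by (intro sum.cong refl) (simp add: rho mult.commute mult.left_commute)
    also have "\<dots> = (\<Sum>a\<in>idx d X. cnj (w a) * of_real (v a)) * ?S"
      by (simp add: sum_product)
    also have "(\<Sum>a\<in>idx d X. cnj (w a) * of_real (v a)) = cnj ?S"
      by (simp add: mult.commute)
    also have "cnj ?S * ?S = of_real ((cmod ?S)\<^sup>2)"
      by (simp only: complex_norm_square mult.commute)
    finally show ?thesis .
  qed
  have "(\<Sum>a\<in>idx d X. \<rho> a a) = of_real (\<Sum>a\<in>idx d X. (v a)\<^sup>2)"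
    by (simp add: rho power2_eq_square)
  then show ?thesis
    unfolding density_def using norm quadratic_form rho by (auto simp del: of_real_power)
qed

lemma partitionsD:
  assumes "\<xi> \<in> partitions n"
  shows "finite \<xi>" "\<Union>\<xi> = Lset n" "X \<in> \<xi> \<Longrightarrow> X \<subseteq> Lset n" "X \<in> \<xi> \<Longrightarrow> X \<noteq> {}"
    "X \<in> \<xi> \<Longrightarrow> finite X" "X \<in> \<xi> \<Longrightarrow> Y \<in> \<xi> \<Longrightarrow> X \<noteq> Y \<Longrightarrow> X \<inter> Y = {}"
proof -
  have U: "\<Union>\<xi> = Lset n" using assms by (simp add: partitions_def)
  then show "finite \<xi>" by (metis Lset_def finite_UnionD finite_atLeastAtMost)
  show "\<Union>\<xi> = Lset n" "X \<in> \<xi> \<Longrightarrow> X \<subseteq> Lset n" using U by auto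
  then show "X \<in> \<xi> \<Longrightarrow> finite X" by (metis Lset_def finite_atLeastAtMost finite_subset)
  show "X \<in> \<xi> \<Longrightarrow> X \<noteq> {}" "X \<in> \<xi> \<Longrightarrow> Y \<in> \<xi> \<Longrightarrow> X \<noteq> Y \<Longrightarrow> X \<inter> Y = {}"
    using assms by (auto simp: partitions_def)
qed

lemma tensor_diag:
  "a \<in> idx d (Lset n) \<Longrightarrow> tensor d n \<pi> \<sigma>s a a = (\<Prod>Z\<in>\<pi>. \<sigma>s Z (res a Z) (res a Z))"
  by (simp add: tensor_def)

lemma tensor_diag_mix_block:
  assumes \<pi>: "\<pi> \<in> partitions n" and Y: "Y \<in> \<pi>"
    and a: "a \<in> idx d (Lset n)" and b: "b \<in> idx d (Lset n)"
    and a_supp: "tensor d n \<pi> \<sigma>s a a \<noteq> 0" and b_supp: "tensor d n \<pi> \<sigma>s b b \<noteq> 0"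
  defines "c \<equiv> \<lambda>i. if i \<in> Y then b i else a i"
  shows "tensor d n \<pi> \<sigma>s c c \<noteq> 0"
proof -
  define D where "D Z x = \<sigma>s Z (res x Z) (res x Z)" for Z x
  have "Y \<subseteq> Lset n" using partitionsD(3)[OF \<pi> Y] .
  then have c: "c \<in> idx d (Lset n)" using a b by (auto simp: c_def idx_def)
  have "res c Y = res b Y" by (auto simp: c_def res_def)
  moreover have "res c Z = res a Z" if "Z \<in> \<pi> - {Y}" for Z
    using partitionsD(6)[OF \<pi>, of Z Y] that Y by (auto simp: c_def res_def fun_eq_iff)
  ultimately have "(\<Prod>Z\<in>\<pi>. D Z c) = D Y b * (\<Prod>Z\<in>\<pi> - {Y}. D Z a)"
    using partitionsD(1)[OF \<pi>] Y by (simp add: prod.remove D_def)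
  moreover have "(\<Prod>Z\<in>\<pi>. D Z a) = D Y a * (\<Prod>Z\<in>\<pi> - {Y}. D Z a)"
    and "(\<Prod>Z\<in>\<pi>. D Z b) = D Y b * (\<Prod>Z\<in>\<pi> - {Y}. D Z b)"
    using partitionsD(1)[OF \<pi>] Y by (simp_all add: prod.remove)
  ultimately show ?thesis
    using a_supp b_supp tensor_diag[OF a] tensor_diag[OF b] tensor_diag[OF c]
    by (simp add: D_def)
qed

definition ones_on :: "nat set \<Rightarrow> nat \<Rightarrow> nat" where
  "ones_on X = (\<lambda>i. if i \<in> X then 1 else 0)"

lemma ones_on_eq_iff: "ones_on X = ones_on Y \<longleftrightarrow> X = Y"
  by (auto simp: ones_on_def fun_eq_iff split: if_splits)

lemma res_ones_on: "res (ones_on S) X = ones_on (S \<inter> X)"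
  by (auto simp: res_def ones_on_def fun_eq_iff)

lemma ones_on_in_idx: "X \<subseteq> Y \<Longrightarrow> \<forall>i\<in>Y. 1 < d i \<Longrightarrow> ones_on X \<in> idx d Y"
  by (auto simp: idx_def ones_on_def)

definition ghz_amp :: "nat set \<Rightarrow> (nat \<Rightarrow> nat) \<Rightarrow> real" where
  "ghz_amp X b = (if b = ones_on {} \<or> b = ones_on X then 1 / sqrt 2 else 0)"

definition ghz :: "(nat \<Rightarrow> nat) \<Rightarrow> nat set \<Rightarrow> mop" where
  "ghz d X = (\<lambda>a b. if a \<in> idx d X \<and> b \<in> idx d X then of_real (ghz_amp X a * ghz_amp X b) else 0)"

definition ghz_prod_amp :: "nat set set \<Rightarrow> (nat \<Rightarrow> nat) \<Rightarrow> real" where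
  "ghz_prod_amp \<xi> a = (\<Prod>X\<in>\<xi>. ghz_amp X (res a X))"

lemma sum_ghz_amp_squares:
  assumes "X \<noteq> {}" "finite X" "\<forall>i\<in>X. 1 < d i"
  shows "(\<Sum>b\<in>idx d X. (ghz_amp X b)\<^sup>2) = 1"
proof -
  have "(\<Sum>b\<in>idx d X. (ghz_amp X b)\<^sup>2) = (\<Sum>b\<in>{ones_on {}, ones_on X}. (ghz_amp X b)\<^sup>2)"
    using assms by (intro sum.mono_neutral_right finite_idx) (auto simp: ghz_amp_def ones_on_in_idx)
  also have "\<dots> = 1"
    using assms(1) by (simp add: ghz_amp_def ones_on_eq_iff power_divide)
  finally show ?thesis .
qed

lemma tensor_ghz:
  assumes "\<xi> \<in> partitions n"
  shows "tensor d n \<xi> (ghz d) a b = (if a \<in> idx d (Lset n) \<and> b \<in> idx d (Lset n)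
           then of_real (ghz_prod_amp \<xi> a * ghz_prod_amp \<xi> b) else 0)"
proof (cases "a \<in> idx d (Lset n) \<and> b \<in> idx d (Lset n)")
  case True
  then have "res a X \<in> idx d X" "res b X \<in> idx d X" if "X \<in> \<xi>" for X
    using partitionsD(3)[OF assms that] res_in_idx by blast+
  then have "(\<Prod>X\<in>\<xi>. ghz d X (res a X) (res b X))
      = (\<Prod>X\<in>\<xi>. of_real (ghz_amp X (res a X) * ghz_amp X (res b X)))"
    by (intro prod.cong refl) (simp add: ghz_def)
  then show ?thesis using True by (simp add: tensor_def ghz_prod_amp_def prod.distrib)
qed (auto simp: tensor_def)

lemma sum_ghz_prod_amp_squares:
  assumes "\<xi> \<in> partitions n" "\<forall>i\<in>Lset n. 1 < d i"
  shows "(\<Sum>a\<in>idx d (Lset n). (ghz_prod_amp \<xi> a)\<^sup>2) = 1"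
proof -
  note \<xi> = partitionsD[OF assms(1)]
  have "(\<Sum>a\<in>idx d (Lset n). (ghz_prod_amp \<xi> a)\<^sup>2)
      = (\<Sum>a\<in>idx d (\<Union>\<xi>). \<Prod>X\<in>\<xi>. (\<lambda>X b. (ghz_amp X b)\<^sup>2) X (res a X))"
    by (simp add: \<xi> ghz_prod_amp_def prod_power_distrib)
  also have "\<dots> = (\<Prod>X\<in>\<xi>. \<Sum>b\<in>idx d X. (ghz_amp X b)\<^sup>2)"
    by (rule sum_idx_Union_prod) (use \<xi> in auto)
  also have "\<dots> = 1"
    using \<xi> assms(2) by (intro prod.neutral ballI sum_ghz_amp_squares) auto
  finally show ?thesis .
qed

lemma tensor_ghz_in_Dunc:
  assumes "\<xi> \<in> partitions n" "\<forall>i\<in>Lset n. 1 < d i"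
  shows "tensor d n \<xi> (ghz d) \<in> Dunc d n \<xi>"
proof -
  have "density d (Lset n) (tensor d n \<xi> (ghz d))"
    by (rule density_rank_one[OF tensor_ghz[OF assms(1)] sum_ghz_prod_amp_squares[OF assms]])
  moreover have "density d X (ghz d X)" if "X \<in> \<xi>" for X
    using partitionsD[OF assms(1)] that assms(2)
    by (intro density_rank_one[where v = "ghz_amp X"] sum_ghz_amp_squares) (auto simp: ghz_def)
  ultimately show ?thesis unfolding Dunc_def by blast
qed

lemma tensor_ghz_diag_neq_0_iff:
  assumes "\<xi> \<in> partitions n" "a \<in> idx d (Lset n)"
  shows "tensor d n \<xi> (ghz d) a a \<noteq> 0 \<longleftrightarrow> (\<forall>X\<in>\<xi>. ghz_amp X (res a X) \<noteq> 0)"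
  using assms partitionsD(1)[OF assms(1)] by (simp add: tensor_ghz ghz_prod_amp_def)

lemma tensor_ghz_notin_Dunc:
  assumes \<xi>: "\<xi> \<in> partitions n" and \<pi>: "\<pi> \<in> partitions n"
    and dims: "\<forall>i\<in>Lset n. 1 < d i" and not_refines: "\<not> refines \<xi> \<pi>"
  shows "tensor d n \<xi> (ghz d) \<notin> Dunc d n \<pi>"
proof
  let ?\<rho> = "tensor d n \<xi> (ghz d)"
  assume "?\<rho> \<in> Dunc d n \<pi>"
  then obtain \<sigma>s where \<sigma>s: "?\<rho> = tensor d n \<pi> \<sigma>s" unfolding Dunc_def by blast
  obtain X where X: "X \<in> \<xi>" "\<forall>Y\<in>\<pi>. \<not> X \<subseteq> Y" using not_refines unfolding refines_def by blast
  have X_sub: "X \<subseteq> Lset n" using partitionsD(3)[OF \<xi> X(1)] .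
  obtain i where i: "i \<in> X" using partitionsD(4)[OF \<xi> X(1)] by blast
  then obtain Y where Y: "Y \<in> \<pi>" "i \<in> Y" using X_sub partitionsD(2)[OF \<pi>] by blast
  obtain j where j: "j \<in> X" "j \<notin> Y" using X(2) Y(1) by blast
  have res_ones_X: "res (ones_on X) X' = ones_on (if X' = X then X else {})" if "X' \<in> \<xi>" for X'
    using partitionsD(6)[OF \<xi> X(1) that] by (auto simp: res_ones_on)
  have "?\<rho> (ones_on {}) (ones_on {}) \<noteq> 0" "?\<rho> (ones_on X) (ones_on X) \<noteq> 0"
    using X_sub dims res_ones_X
    by (auto simp: tensor_ghz_diag_neq_0_iff[OF \<xi>] ones_on_in_idx res_ones_on ghz_amp_def)
  then have "?\<rho> (\<lambda>k. if k \<in> Y then ones_on X k else ones_on {} k)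
                (\<lambda>k. if k \<in> Y then ones_on X k else ones_on {} k) \<noteq> 0"
    unfolding \<sigma>s using X_sub dims
    by (intro tensor_diag_mix_block[OF \<pi> Y(1)]) (auto simp: ones_on_in_idx)
  moreover have "(\<lambda>k. if k \<in> Y then ones_on X k else ones_on {} k) = ones_on (X \<inter> Y)"
    by (auto simp: ones_on_def)
  moreover have "ghz_amp X (res (ones_on (X \<inter> Y)) X) = 0"
    using i j Y(2) by (auto simp: res_ones_on ghz_amp_def ones_on_eq_iff Int_absorb2)
  moreover have "ones_on (X \<inter> Y) \<in> idx d (Lset n)"
    using X_sub dims by (intro ones_on_in_idx) auto
  ultimately show False
    using X(1) tensor_ghz_diag_neq_0_iff[OF \<xi>] by auto
qed

lemma refines_refl: "refines \<xi> \<xi>"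
  by (auto simp: refines_def)

lemma refines_trans: "refines \<xi> \<zeta> \<Longrightarrow> refines \<zeta> \<upsilon> \<Longrightarrow> refines \<xi> \<upsilon>"
  unfolding refines_def by (meson order.trans)

lemma refines_antisym:
  assumes "\<xi> \<in> partitions n" "\<upsilon> \<in> partitions n" "refines \<xi> \<upsilon>" "refines \<upsilon> \<xi>"
  shows "\<xi> = \<upsilon>"
proof -
  have "A \<subseteq> B" if A: "A \<in> partitions n" and "refines A B" "refines B A" for A B
  proof
    fix Y assume Y: "Y \<in> A"
    obtain X where X: "X \<in> B" "Y \<subseteq> X" using \<open>refines A B\<close> Y unfolding refines_def by blast
    obtain Y' where Y': "Y' \<in> A" "X \<subseteq> Y'" using \<open>refines B A\<close> X unfolding refines_def by blast
    have "Y \<inter> Y' \<noteq> {}" using partitionsD(4)[OF A Y] X Y' by blast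
    then have "Y = Y'" using partitionsD(6)[OF A Y Y'(1)] by blast
    then show "Y \<in> B" using X Y' by (metis subset_antisym)
  qed
  then show ?thesis using assms by blast
qed

lemma downset_in_PII: "\<upsilon> \<in> partitions n \<Longrightarrow> downset n \<upsilon> \<in> PII n"
  unfolding PII_def downset_def using refines_refl refines_trans by blast

lemma in_Cunc_upset_downset:
  assumes \<xi>: "\<xi> \<in> partitions n" and "\<rho> \<in> Dunc d n \<xi>"
    and only_coarser: "\<forall>\<pi>\<in>partitions n. \<rho> \<in> Dunc d n \<pi> \<longrightarrow> refines \<xi> \<pi>"
  shows "\<rho> \<in> Cunc d n (upset n (downset n \<xi>))"
proof -
  have "\<rho> \<in> DL d n" using \<open>\<rho> \<in> Dunc d n \<xi>\<close> by (simp add: Dunc_def DL_def)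
  moreover have "\<rho> \<in> DSunc d n \<zeta>" if "\<zeta> \<in> upset n (downset n \<xi>)" for \<zeta>
    using that \<xi> \<open>\<rho> \<in> Dunc d n \<xi>\<close> refines_refl by (auto simp: upset_def downset_def DSunc_def)
  moreover have "\<rho> \<notin> DSunc d n \<zeta>" if \<zeta>: "\<zeta> \<in> PII n - upset n (downset n \<xi>)" for \<zeta>
  proof
    assume "\<rho> \<in> DSunc d n \<zeta>"
    then obtain \<pi> where "\<pi> \<in> \<zeta>" "\<rho> \<in> Dunc d n \<pi>" by (auto simp: DSunc_def)
    moreover have "\<pi> \<in> partitions n" using \<zeta> \<open>\<pi> \<in> \<zeta>\<close> by (auto simp: PII_def)
    ultimately have "\<xi> \<in> \<zeta>" using \<zeta> \<xi> only_coarser by (auto simp: PII_def)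
    then have "downset n \<xi> \<subseteq> \<zeta>" using \<zeta> by (auto simp: PII_def downset_def)
    then show False using \<zeta> by (simp add: upset_def)
  qed
  ultimately show ?thesis unfolding Cunc_def by blast
qed

lemma Cunc_upset_downset_subset:
  "\<upsilon> \<in> partitions n \<Longrightarrow> Cunc d n (upset n (downset n \<upsilon>)) \<subseteq> DSunc d n (downset n \<upsilon>)"
  using downset_in_PII by (auto simp: Cunc_def upset_def)

lemma refines_if_Cunc_eq:
  assumes \<xi>: "\<xi> \<in> partitions n" and \<upsilon>: "\<upsilon> \<in> partitions n" and dims: "\<forall>i\<in>Lset n. 1 < d i"
    and eq: "Cunc d n (upset n (downset n \<xi>)) = Cunc d n (upset n (downset n \<upsilon>))"
  shows "refines \<xi> \<upsilon>"
proof -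
  let ?\<rho> = "tensor d n \<xi> (ghz d)"
  have only_coarser: "\<forall>\<pi>\<in>partitions n. ?\<rho> \<in> Dunc d n \<pi> \<longrightarrow> refines \<xi> \<pi>"
    using tensor_ghz_notin_Dunc[OF \<xi> _ dims] by blast
  have "?\<rho> \<in> DSunc d n (downset n \<upsilon>)"
    using in_Cunc_upset_downset[OF \<xi> tensor_ghz_in_Dunc[OF \<xi> dims] only_coarser]
      Cunc_upset_downset_subset[OF \<upsilon>] eq by blast
  then obtain \<pi> where "\<pi> \<in> partitions n" "refines \<pi> \<upsilon>" "?\<rho> \<in> Dunc d n \<pi>"
    by (auto simp: DSunc_def downset_def)
  then show ?thesis using only_coarser refines_trans by blast
qed

theorem proposition4:
  fixes n :: nat and d :: "nat \<Rightarrow> nat" and \<xi> \<upsilon> :: "nat set set"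
  assumes "n \<ge> 1"
    and "\<forall>i\<in>Lset n. 1 < d i"
    and "\<xi> \<in> partitions n" and "\<upsilon> \<in> partitions n"
  shows "Cunc d n (upset n (downset n \<xi>)) = Cunc d n (upset n (downset n \<upsilon>)) \<longleftrightarrow> \<xi> = \<upsilon>"
proof
  assume eq: "Cunc d n (upset n (downset n \<xi>)) = Cunc d n (upset n (downset n \<upsilon>))"
  have "refines \<xi> \<upsilon>" using refines_if_Cunc_eq[OF assms(3,4,2) eq] .
  moreover have "refines \<upsilon> \<xi>" using refines_if_Cunc_eq[OF assms(4,3,2) eq[symmetric]] .
  ultimately show "\<xi> = \<upsilon>" using refines_antisym assms(3,4) by blast
qed simp

end
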